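(* For every finite capacitated graph $G=(V,E,c_V,c_E)$ with nonnegative vertex and edge capacities, the Rising-Tide algorithm terminates and returns a maximal feasible fractional matching of $G$.
   Context: Let $G=(V,E,c_V,c_E)$ be a graph (edges may include self-loops) with vertex capacities $c_V:V\to\mathbb{R}_{\ge0}$ and edge capacities $c_E:E\to\mathbb{R}_{\ge0}$. A function $\mu:E\to\mathbb{R}_{\ge0}$ is a feasible fractional matching if $\mu(i,j)\le c_E(i,j)$ for every edge and $\sum_j\mu(i,j)\le c_V(i)$ for every vertex $i$, where a self-loop $(i,i)$ counts only once in the sum for $i$. It is maximal if no feasible $\mu'\ne\mu$ satisfies $\mu'\ge\mu$ pointwise. Vertex $i$ is saturated if $\sum_j\mu(i,j)=c_V(i)$; edge $(i,j)$ is saturated if $\mu(i,j)=c_E(i,j)$. Rising-Tide: set $E'=\{e\in E: c_E(e)>0\}$ and $\mu\equiv0$; while $E'\neq\emptyset$: choose the maximum $\delta\ge0$ such that $\mu+\delta\cdot\mathbf{1}_{E'}$ is a feasible fractional matching, set $\mu\gets\mu+\delta\mathbf{1}_{E'}$, and remove from $E'$ every edge $(i,j)$ such that $i$, $j$, or $(i,j)$ is saturated; finally return $\mu$. *)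

theory Defs
  imports Complex_Main "HOL-Library.While_Combinator"
begin

text \<open>A capacitated graph: vertex set V, edge set E of unordered pairs
  (an edge is a set of card 2; a self-loop (i,i) is the singleton {i}),
  vertex capacities cV and edge capacities cE.\<close>

definition graph_edges :: "'a set \<Rightarrow> 'a set set \<Rightarrow> bool" where
  "graph_edges V E \<longleftrightarrow> (\<forall>e\<in>E. e \<subseteq> V \<and> (card e = 1 \<or> card e = 2))"

text \<open>Load of vertex i; a self-loop {i} is counted once.\<close>
definition load :: "'a set set \<Rightarrow> ('a set \<Rightarrow> real) \<Rightarrow> 'a \<Rightarrow> real" where
  "load E mu i = (\<Sum>e\<in>{e\<in>E. i \<in> e}. mu e)"

definition feasible_fm ::
  "'a set \<Rightarrow> 'a set set \<Rightarrow> ('a \<Rightarrow> real) \<Rightarrow> ('a set \<Rightarrow> real) \<Rightarrow> ('a set \<Rightarrow> real) \<Rightarrow> bool" where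
  "feasible_fm V E cV cE mu \<longleftrightarrow>
     (\<forall>e. e \<notin> E \<longrightarrow> mu e = 0) \<and>
     (\<forall>e\<in>E. 0 \<le> mu e \<and> mu e \<le> cE e) \<and>
     (\<forall>i\<in>V. load E mu i \<le> cV i)"

definition maximal_fm ::
  "'a set \<Rightarrow> 'a set set \<Rightarrow> ('a \<Rightarrow> real) \<Rightarrow> ('a set \<Rightarrow> real) \<Rightarrow> ('a set \<Rightarrow> real) \<Rightarrow> bool" where
  "maximal_fm V E cV cE mu \<longleftrightarrow> feasible_fm V E cV cE mu \<and>
     \<not> (\<exists>mu'. feasible_fm V E cV cE mu' \<and> mu' \<noteq> mu \<and> (\<forall>e. mu e \<le> mu' e))"

definition rt_step ::
  "'a set \<Rightarrow> 'a set set \<Rightarrow> ('a \<Rightarrow> real) \<Rightarrow> ('a set \<Rightarrow> real)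
   \<Rightarrow> ('a set \<Rightarrow> real) \<times> 'a set set \<Rightarrow> ('a set \<Rightarrow> real) \<times> 'a set set" where
  "rt_step V E cV cE st =
     (let mu = fst st; E' = snd st;
          delta = (GREATEST d::real. 0 \<le> d \<and>
                     feasible_fm V E cV cE (\<lambda>e. mu e + (if e \<in> E' then d else 0)));
          mu' = (\<lambda>e. mu e + (if e \<in> E' then delta else 0));
          E'' = {e\<in>E'. \<not> (mu' e = cE e \<or> (\<exists>i\<in>e. load E mu' i = cV i))}
      in (mu', E''))"

text \<open>Rising-Tide: None means non-termination.\<close>
definition rising_tide ::
  "'a set \<Rightarrow> 'a set set \<Rightarrow> ('a \<Rightarrow> real) \<Rightarrow> ('a set \<Rightarrow> real) \<Rightarrow> ('a set \<Rightarrow> real) option" where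
  "rising_tide V E cV cE =
     map_option fst
       (while_option (\<lambda>st. snd st \<noteq> {}) (rt_step V E cV cE)
          ((\<lambda>_. 0), {e\<in>E. cE e > 0}))"

end

theory Submission
  imports Defs
begin

text \<open>Call an edge blocked when it or one of its endpoints is saturated.  Rising-Tide keeps
  the invariant that the current matching is feasible and that every edge already removed
  from the active set is blocked.  The step size of each round is the minimum of finitely many
  slacks, so it exists and at least one active edge becomes blocked: the active set shrinks
  and the loop terminates.  When it stops, every edge is blocked, and a blocked edge cannot be
  raised in any feasible matching above the current one, which is maximality.\<close>

lemma graph_edges_subset: "graph_edges V E \<Longrightarrow> e \<in> E \<Longrightarrow> e \<subseteq> V"
  unfolding graph_edges_def by blast

lemma graph_edges_finite:
  assumes "finite V" "graph_edges V E"
  shows "finite E"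
  using assms finite_subset[of E "Pow V"] unfolding graph_edges_def by auto

lemma load_mono:
  assumes "finite E" "\<And>e. mu e \<le> mu' e"
  shows "load E mu i \<le> load E mu' i"
  unfolding load_def using assms by (intro sum_mono) auto

lemma load_increase_ge:
  assumes "finite E" "\<And>e. mu e \<le> mu' e" "x \<in> E" "i \<in> x"
  shows "load E mu i + (mu' x - mu x) \<le> load E mu' i"
proof -
  have "mu' x - mu x \<le> (\<Sum>e\<in>{e\<in>E. i \<in> e}. mu' e - mu e)"
    using assms by (intro member_le_sum) auto
  also have "\<dots> = load E mu' i - load E mu i"
    unfolding load_def by (simp add: sum_subtractf)
  finally show ?thesis by simp
qed

definition blocked ::
  "'a set set \<Rightarrow> ('a \<Rightarrow> real) \<Rightarrow> ('a set \<Rightarrow> real) \<Rightarrow> ('a set \<Rightarrow> real) \<Rightarrow> 'a set \<Rightarrow> bool" where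
  "blocked E cV cE mu e \<longleftrightarrow> mu e = cE e \<or> (\<exists>i\<in>e. load E mu i = cV i)"

lemma blocked_edge_cannot_rise:
  assumes "finite E" "e \<in> E" "e \<subseteq> V" "blocked E cV cE mu e"
    and "feasible_fm V E cV cE mu'" "\<And>e. mu e \<le> mu' e"
  shows "mu' e = mu e"
  using assms(4)
proof (unfold blocked_def, elim disjE bexE)
  assume "mu e = cE e"
  then show ?thesis using assms(2,5) assms(6)[of e] unfolding feasible_fm_def by force
next
  fix i assume i: "i \<in> e" "load E mu i = cV i"
  have "load E mu i + (mu' e - mu e) \<le> load E mu' i"
    using load_increase_ge[OF assms(1) assms(6) assms(2) i(1)] .
  moreover have "load E mu' i \<le> cV i"
    using assms(3,5) i(1) unfolding feasible_fm_def by auto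
  ultimately show ?thesis using i(2) assms(6)[of e] by linarith
qed

lemma maximal_fm_if_all_blocked:
  assumes "finite V" "graph_edges V E" "feasible_fm V E cV cE mu"
    and "\<forall>e\<in>E. blocked E cV cE mu e"
  shows "maximal_fm V E cV cE mu"
  unfolding maximal_fm_def
proof (intro conjI assms(3) notI, elim exE conjE)
  fix mu' assume mu': "feasible_fm V E cV cE mu'" "mu' \<noteq> mu" "\<forall>e. mu e \<le> mu' e"
  have "mu' e = mu e" for e
  proof (cases "e \<in> E")
    case True
    with assms(4) have "blocked E cV cE mu e" by blast
    then show ?thesis
      using blocked_edge_cannot_rise graph_edges_finite[OF assms(1,2)] True
        graph_edges_subset[OF assms(2) True] mu'(1,3) by blast
  next
    case False
    then show ?thesis using mu'(1) assms(3) unfolding feasible_fm_def by simp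
  qed
  then show False using mu'(2) by blast
qed

definition raise_on :: "'e set \<Rightarrow> real \<Rightarrow> ('e \<Rightarrow> real) \<Rightarrow> 'e \<Rightarrow> real" where
  "raise_on E' d mu = (\<lambda>e. mu e + (if e \<in> E' then d else 0))"

lemma load_raise_on:
  assumes "E' \<subseteq> E" "finite E"
  shows "load E (raise_on E' d mu) i = load E mu i + d * real (card {e\<in>E'. i \<in> e})"
proof -
  have "load E (raise_on E' d mu) i
      = load E mu i + (\<Sum>e\<in>{e\<in>E. i \<in> e}. if e \<in> E' then d else 0)"
    unfolding load_def raise_on_def by (simp add: sum.distrib)
  also have "\<dots> = load E mu i + (\<Sum>e\<in>{x\<in>{e\<in>E. i \<in> e}. x \<in> E'}. d)"
    using assms by (simp add: sum.inter_filter[symmetric] del: sum_constant)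
  also have "{x\<in>{e\<in>E. i \<in> e}. x \<in> E'} = {e\<in>E'. i \<in> e}"
    using assms by auto
  finally show ?thesis by (simp add: mult.commute)
qed

lemma feasible_raise_on_iff:
  assumes "finite E" "E' \<subseteq> E" "feasible_fm V E cV cE mu"
  shows "(0 \<le> d \<and> feasible_fm V E cV cE (raise_on E' d mu)) \<longleftrightarrow>
     0 \<le> d \<and> (\<forall>x\<in>E'. d \<le> cE x - mu x) \<and>
     (\<forall>i\<in>V. d * real (card {e\<in>E'. i \<in> e}) \<le> cV i - load E mu i)"
  using assms unfolding feasible_fm_def load_raise_on[OF assms(2,1)]
  by (auto simp: raise_on_def subset_iff)

lemma blocked_raise_on:
  assumes "finite E" "e \<in> E - E'" "e \<subseteq> V" "0 \<le> d" "blocked E cV cE mu e"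
    and "feasible_fm V E cV cE (raise_on E' d mu)"
  shows "blocked E cV cE (raise_on E' d mu) e"
  using assms(5)
proof (unfold blocked_def, elim disjE bexE)
  assume "mu e = cE e"
  then show "raise_on E' d mu e = cE e \<or> (\<exists>i\<in>e. load E (raise_on E' d mu) i = cV i)"
    using assms(2) by (simp add: raise_on_def)
next
  fix i assume i: "i \<in> e" "load E mu i = cV i"
  have "load E mu i \<le> load E (raise_on E' d mu) i"
    using assms(1,4) by (intro load_mono) (simp_all add: raise_on_def)
  moreover have "load E (raise_on E' d mu) i \<le> cV i"
    using assms(3,6) i(1) unfolding feasible_fm_def by auto
  ultimately show "raise_on E' d mu e = cE e \<or> (\<exists>i\<in>e. load E (raise_on E' d mu) i = cV i)"
    using i by force
qed

lemma step_constraints_greatest: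
  fixes a :: "'e \<Rightarrow> real" and b k :: "'v \<Rightarrow> real"
  assumes "finite A" "A \<noteq> {}" "finite B" "\<forall>x\<in>A. 0 \<le> a x" "\<forall>i\<in>B. 0 \<le> b i \<and> 0 \<le> k i"
  defines "P d \<equiv> 0 \<le> d \<and> (\<forall>x\<in>A. d \<le> a x) \<and> (\<forall>i\<in>B. d * k i \<le> b i)"
  obtains D where "P D" "\<And>d. P d \<Longrightarrow> d \<le> D"
    and "(\<exists>x\<in>A. D = a x) \<or> (\<exists>i\<in>B. 0 < k i \<and> D * k i = b i)"
proof -
  define M where "M = a ` A \<union> (\<lambda>i. b i / k i) ` {i\<in>B. 0 < k i}"
  have M: "finite M" "M \<noteq> {}"
    using assms(1-3) unfolding M_def by auto
  have P_iff: "P d \<longleftrightarrow> 0 \<le> d \<and> (\<forall>m\<in>M. d \<le> m)" for d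
  proof -
    have "d * k i \<le> b i \<longleftrightarrow> (0 < k i \<longrightarrow> d \<le> b i / k i)" if "i \<in> B" for i
      using assms(5) that by (auto simp: pos_le_divide_eq less_le)
    then show ?thesis unfolding P_def M_def by auto
  qed
  show thesis
  proof (rule that[of "Min M"])
    have "0 \<le> Min M"
      using M assms(4,5) unfolding M_def by auto
    then show "P (Min M)" using M by (simp add: P_iff)
    show "d \<le> Min M" if "P d" for d
      using that M by (simp add: P_iff)
    show "(\<exists>x\<in>A. Min M = a x) \<or> (\<exists>i\<in>B. 0 < k i \<and> Min M * k i = b i)"
      using Min_in[OF M] unfolding M_def by auto
  qed
qed

lemma rt_step_eq:
  "rt_step V E cV cE (mu, E') =
     (let D = (GREATEST d. 0 \<le> d \<and> feasible_fm V E cV cE (raise_on E' d mu))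
      in (raise_on E' D mu, {e\<in>E'. \<not> blocked E cV cE (raise_on E' D mu) e}))"
  unfolding rt_step_def raise_on_def blocked_def by (simp add: Let_def)

fun rt_invariant ::
  "'a set \<Rightarrow> 'a set set \<Rightarrow> ('a \<Rightarrow> real) \<Rightarrow> ('a set \<Rightarrow> real)
   \<Rightarrow> ('a set \<Rightarrow> real) \<times> 'a set set \<Rightarrow> bool" where
  "rt_invariant V E cV cE (mu, E') \<longleftrightarrow>
     feasible_fm V E cV cE mu \<and> E' \<subseteq> E \<and> (\<forall>e\<in>E - E'. blocked E cV cE mu e)"

lemma rt_step_blocks_active_edge:
  assumes "finite V" "finite E" "rt_invariant V E cV cE (mu, E')" "E' \<noteq> {}"
  obtains D where
    "rt_step V E cV cE (mu, E') = (raise_on E' D mu, {e\<in>E'. \<not> blocked E cV cE (raise_on E' D mu) e})"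
    and "0 \<le> D" "feasible_fm V E cV cE (raise_on E' D mu)"
    and "\<exists>x\<in>E'. blocked E cV cE (raise_on E' D mu) x"
proof -
  have mu: "feasible_fm V E cV cE mu" and E': "E' \<subseteq> E"
    using assms(3) by auto
  define k where "k i = real (card {e\<in>E'. i \<in> e})" for i
  have slacks: "\<forall>x\<in>E'. 0 \<le> cE x - mu x" "\<forall>i\<in>V. 0 \<le> cV i - load E mu i \<and> 0 \<le> k i"
    using mu E' unfolding feasible_fm_def k_def by auto
  have feasible_step_iff: "(0 \<le> d \<and> feasible_fm V E cV cE (raise_on E' d mu)) \<longleftrightarrow>
      0 \<le> d \<and> (\<forall>x\<in>E'. d \<le> cE x - mu x) \<and> (\<forall>i\<in>V. d * k i \<le> cV i - load E mu i)" for d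
    unfolding k_def by (rule feasible_raise_on_iff[OF assms(2) E' mu])
  obtain D where D_ok: "0 \<le> D \<and> feasible_fm V E cV cE (raise_on E' D mu)"
    and D_max: "\<And>d. 0 \<le> d \<and> feasible_fm V E cV cE (raise_on E' d mu) \<Longrightarrow> d \<le> D"
    and D_tight: "(\<exists>x\<in>E'. D = cE x - mu x) \<or> (\<exists>i\<in>V. 0 < k i \<and> D * k i = cV i - load E mu i)"
    unfolding feasible_step_iff
    by (rule step_constraints_greatest[OF finite_subset[OF E' assms(2)] assms(4) assms(1) slacks]) blast
  have "(GREATEST d. 0 \<le> d \<and> feasible_fm V E cV cE (raise_on E' d mu)) = D"
    using D_ok D_max by (rule Greatest_equality)
  then have step: "rt_step V E cV cE (mu, E') =
      (raise_on E' D mu, {e\<in>E'. \<not> blocked E cV cE (raise_on E' D mu) e})"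
    by (simp add: rt_step_eq)
  have progress: "\<exists>x\<in>E'. blocked E cV cE (raise_on E' D mu) x"
    using D_tight
  proof (elim disjE bexE conjE)
    fix x assume "x \<in> E'" "D = cE x - mu x"
    then have "raise_on E' D mu x = cE x" by (simp add: raise_on_def)
    then show ?thesis using \<open>x \<in> E'\<close> unfolding blocked_def by blast
  next
    fix i assume i: "i \<in> V" "0 < k i" "D * k i = cV i - load E mu i"
    then have "{e\<in>E'. i \<in> e} \<noteq> {}"
      unfolding k_def by (metis card.empty of_nat_0 less_irrefl)
    then obtain x where "x \<in> E'" "i \<in> x" by blast
    moreover have "load E (raise_on E' D mu) i = cV i"
      using i(3) load_raise_on[OF E' assms(2)] unfolding k_def by simp
    ultimately show ?thesis unfolding blocked_def by blast
  qed
  show thesis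
    using that[OF step] D_ok progress by blast
qed

lemma rt_step_invariant_card_less:
  assumes "finite V" "graph_edges V E" "rt_invariant V E cV cE st" "snd st \<noteq> {}"
  shows "rt_invariant V E cV cE (rt_step V E cV cE st) \<and>
    card (snd (rt_step V E cV cE st)) < card (snd st)"
proof -
  obtain mu E' where st: "st = (mu, E')" by fastforce
  have E: "finite E" using graph_edges_finite[OF assms(1,2)] .
  have "rt_invariant V E cV cE (mu, E')" "E' \<noteq> {}"
    using assms(3,4) st by auto
  then obtain D where step: "rt_step V E cV cE (mu, E') =
      (raise_on E' D mu, {e\<in>E'. \<not> blocked E cV cE (raise_on E' D mu) e})"
    and D: "0 \<le> D" "feasible_fm V E cV cE (raise_on E' D mu)"
    and progress: "\<exists>x\<in>E'. blocked E cV cE (raise_on E' D mu) x"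
    by (rule rt_step_blocks_active_edge[OF assms(1) E])
  have inv: "feasible_fm V E cV cE mu" "E' \<subseteq> E" "\<forall>e\<in>E - E'. blocked E cV cE mu e"
    using assms(3) st by auto
  have blocked_outside: "blocked E cV cE (raise_on E' D mu) e" if "e \<in> E - E'" for e
    by (rule blocked_raise_on[OF E that _ D(1) _ D(2)])
      (use that inv(3) graph_edges_subset[OF assms(2)] in auto)
  have "rt_invariant V E cV cE (raise_on E' D mu, {e\<in>E'. \<not> blocked E cV cE (raise_on E' D mu) e})"
    unfolding rt_invariant.simps using D(2) inv(2) blocked_outside by blast
  moreover have "card {e\<in>E'. \<not> blocked E cV cE (raise_on E' D mu) e} < card E'"
    using progress finite_subset[OF inv(2) E] by (intro psubset_card_mono) auto
  ultimately show ?thesis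
    unfolding st step snd_conv by (rule conjI)
qed

theorem lemma10:
  fixes V :: "'a set" and E :: "'a set set"
    and cV :: "'a \<Rightarrow> real" and cE :: "'a set \<Rightarrow> real"
  assumes "finite V"
    and "graph_edges V E"
    and "\<forall>i\<in>V. 0 \<le> cV i"
    and "\<forall>e\<in>E. 0 \<le> cE e"
  shows "\<exists>mu. rising_tide V E cV cE = Some mu \<and> maximal_fm V E cV cE mu"
proof -
  let ?inv = "rt_invariant V E cV cE" and ?active = "\<lambda>st. snd st \<noteq> {}"
  define st0 where "st0 = ((\<lambda>_. 0) :: 'a set \<Rightarrow> real, {e\<in>E. 0 < cE e})"
  have init: "?inv st0"
    using assms(3,4) by (auto simp: st0_def feasible_fm_def blocked_def load_def)
  have step: "?inv (rt_step V E cV cE st) \<and> card (snd (rt_step V E cV cE st)) < card (snd st)"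
    if "?inv st" "?active st" for st
    using rt_step_invariant_card_less[OF assms(1,2)] that .
  have "\<exists>st. while_option ?active (rt_step V E cV cE) st0 = Some st"
    using measure_while_option_Some[where P = ?inv and f = "\<lambda>st. card (snd st)", OF step init] .
  then obtain st where st: "while_option ?active (rt_step V E cV cE) st0 = Some st" ..
  have "?inv st"
    using while_option_rule[where P = ?inv, OF step[THEN conjunct1] st init] .
  moreover have "snd st = {}"
    using while_option_stop[OF st] by simp
  ultimately have "feasible_fm V E cV cE (fst st)" "\<forall>e\<in>E. blocked E cV cE (fst st) e"
    by (cases st, simp)+
  then have "maximal_fm V E cV cE (fst st)"
    by (rule maximal_fm_if_all_blocked[OF assms(1,2)])
  then show ?thesis
    using st unfolding rising_tide_def st0_def[symmetric] by simp
qed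

end
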